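(* Let $(\lambda,\mu,\mu')$ be an admissible triplet with associated weights $\mu^*,\mu'^*$. Then $(\lambda,\mu,\mu')$ is of type 0, i.e. $\langle\lambda+\mu'^*,\alpha_n^\vee\rangle=\lambda_{n-1}+\lambda_n+\mu'^*_{n-1}+\mu'^*_n\ge0$, if and only if the triplet $(\lambda,\mu'^*,\mu^* )$ is admissible.
   Context: Type $D_n$ weights are $(\lambda_1,\dots,\lambda_n)$; $\langle\lambda,\alpha_j^\vee\rangle=\lambda_j-\lambda_{j+1}$ for $j<n$ and $\langle\lambda,\alpha_n^\vee\rangle=\lambda_{n-1}+\lambda_n$; $P_+=\{\lambda_j\in\frac12\mathbb Z,\lambda_j-\lambda_k\in\mathbb Z,\lambda_1\ge\dots\ge\lambda_n,\lambda_{n-1}+\lambda_n\ge0\}$; $P[S]=\{(\pm\frac12,\dots,\pm\frac12)\}$. For $k\ge0$, $\Delta^k$ is the set of sums $\mu_1+\dots+\mu_k$ over tuples $(\mu_1,\dots,\mu_k)\in P[S]^k$ all of whose partial sums lie in $P_+$ ($\Delta^0=\{0\}$). A triplet $(\lambda,\mu,\mu')$ is admissible if $\lambda\in\Delta^k$ for some $k\ge0$, $\mu,\mu'\in P[S]$, and $\lambda+\mu,\ \lambda+\mu+\mu'\in P_+$. A free interval of the triplet is a subset $\mathrm{Fr}\subset\{1,\dots,n\}$, maximal with respect to inclusion, such that $\lambda_j$ is constant on $\mathrm{Fr}$ and $\mu_j\mu'_j<0$ for all $j\in\mathrm{Fr}$. The weights $\mu^*,\mu'^*$: outside free intervals they agree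 with $\mu,\mu'$; on each free interval $\mathrm{Fr}$, with $b$ the number of $j\in\mathrm{Fr}$ with $\mu'_j=+\frac12$, $\mu'^*_j=+\frac12$ on the $b$ smallest elements of $\mathrm{Fr}$ and $-\frac12$ on the rest, and $\mu^*_j=-\mu'^*_j$ on $\mathrm{Fr}$. *)

theory Defs
  imports Complex_Main "HOL-Library.Function_Algebras"
begin

text \<open>Type D_n weights are functions nat => real, 1-based, supported on {1..n}
  (value 0 outside {1..n}).\<close>

definition Pplus :: "nat \<Rightarrow> (nat \<Rightarrow> real) set" where
  "Pplus n = {lam. (\<forall>j\<in>{1..n}. 2 * lam j \<in> \<int>)
      \<and> (\<forall>j\<in>{1..n}. \<forall>k\<in>{1..n}. lam j - lam k \<in> \<int>)
      \<and> (\<forall>j. 1 \<le> j \<and> j < n \<longrightarrow> lam (j + 1) \<le> lam j)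
      \<and> lam (n - 1) + lam n \<ge> 0
      \<and> (\<forall>j. j \<notin> {1..n} \<longrightarrow> lam j = 0)}"

definition PS :: "nat \<Rightarrow> (nat \<Rightarrow> real) set" where
  "PS n = {mu. (\<forall>j\<in>{1..n}. mu j = 1/2 \<or> mu j = -1/2)
      \<and> (\<forall>j. j \<notin> {1..n} \<longrightarrow> mu j = 0)}"

definition Delta :: "nat \<Rightarrow> nat \<Rightarrow> (nat \<Rightarrow> real) set" where
  "Delta n k = {sum_list ms | ms. length ms = k \<and> set ms \<subseteq> PS n
      \<and> (\<forall>i\<in>{1..k}. sum_list (take i ms) \<in> Pplus n)}"

definition coroot_n :: "nat \<Rightarrow> (nat \<Rightarrow> real) \<Rightarrow> real" where
  "coroot_n n lam = lam (n - 1) + lam n"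

definition admissible :: "nat \<Rightarrow> (nat \<Rightarrow> real) \<Rightarrow> (nat \<Rightarrow> real) \<Rightarrow> (nat \<Rightarrow> real) \<Rightarrow> bool" where
  "admissible n lam mu mu' \<longleftrightarrow> (\<exists>k. lam \<in> Delta n k) \<and> mu \<in> PS n \<and> mu' \<in> PS n
      \<and> lam + mu \<in> Pplus n \<and> lam + mu + mu' \<in> Pplus n"

definition free_cond :: "(nat \<Rightarrow> real) \<Rightarrow> (nat \<Rightarrow> real) \<Rightarrow> (nat \<Rightarrow> real) \<Rightarrow> nat set \<Rightarrow> bool" where
  "free_cond lam mu mu' F \<longleftrightarrow> (\<forall>i\<in>F. \<forall>j\<in>F. lam i = lam j) \<and> (\<forall>j\<in>F. mu j * mu' j < 0)"

definition free_interval :: "nat \<Rightarrow> (nat \<Rightarrow> real) \<Rightarrow> (nat \<Rightarrow> real) \<Rightarrow> (nat \<Rightarrow> real) \<Rightarrow> nat set \<Rightarrow> bool" where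
  "free_interval n lam mu mu' F \<longleftrightarrow> F \<subseteq> {1..n} \<and> free_cond lam mu mu' F
      \<and> (\<forall>G. F \<subseteq> G \<and> G \<subseteq> {1..n} \<and> free_cond lam mu mu' G \<longrightarrow> G = F)"

definition mu'_star :: "nat \<Rightarrow> (nat \<Rightarrow> real) \<Rightarrow> (nat \<Rightarrow> real) \<Rightarrow> (nat \<Rightarrow> real) \<Rightarrow> nat \<Rightarrow> real" where
  "mu'_star n lam mu mu' j =
    (if \<exists>F. free_interval n lam mu mu' F \<and> j \<in> F then
       (let F = (THE F. free_interval n lam mu mu' F \<and> j \<in> F);
            b = card {i\<in>F. mu' i = 1/2}
        in if card {i\<in>F. i < j} < b then 1/2 else -1/2)
     else mu' j)"

definition mu_star :: "nat \<Rightarrow> (nat \<Rightarrow> real) \<Rightarrow> (nat \<Rightarrow> real) \<Rightarrow> (nat \<Rightarrow> real) \<Rightarrow> nat \<Rightarrow> real" where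
  "mu_star n lam mu mu' j =
    (if \<exists>F. free_interval n lam mu mu' F \<and> j \<in> F then - mu'_star n lam mu mu' j else mu j)"

end

theory Submission
  imports Defs
begin

text \<open>On each free interval, mu'* and mu* only rearrange the entries of mu' and mu (which are
  opposite there), so lam + mu'* + mu* = lam + mu + mu' and both new weights lie in P[S]; hence
  (lam, mu'*, mu*) is admissible iff lam + mu'* is dominant. The entries of lam + mu'* never
  increase: where lam drops it drops by an integer, which absorbs a change of 1 in mu'*; where lam
  is constant, mu'* is sorted inside a free interval, and at the ends of a free interval the
  dominance of lam + mu + mu' forces mu' to be extremal. So the pairing with the last coroot is
  the only condition of dominance that can fail.\<close>

definition free_block :: "nat \<Rightarrow> (nat \<Rightarrow> real) \<Rightarrow> (nat \<Rightarrow> real) \<Rightarrow> (nat \<Rightarrow> real) \<Rightarrow> nat \<Rightarrow> nat set" where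
  "free_block n lam mu mu' j = {i \<in> {1..n}. lam i = lam j \<and> mu i * mu' i < 0}"

lemma free_cond_free_block: "free_cond lam mu mu' (free_block n lam mu mu' j)"
  unfolding free_cond_def free_block_def by auto

lemma free_interval_eq_free_block:
  assumes "free_interval n lam mu mu' F" "j \<in> F"
  shows "F = free_block n lam mu mu' j"
proof -
  have "F \<subseteq> free_block n lam mu mu' j"
    using assms unfolding free_interval_def free_cond_def free_block_def by blast
  moreover have "free_block n lam mu mu' j \<subseteq> {1..n}"
    unfolding free_block_def by auto
  ultimately show ?thesis
    using assms(1) free_cond_free_block[of lam mu mu' n j] unfolding free_interval_def by blast
qed

lemma free_interval_free_block:
  assumes "j \<in> {1..n}" "mu j * mu' j < 0"
  shows "free_interval n lam mu mu' (free_block n lam mu mu' j)"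
proof -
  have "j \<in> free_block n lam mu mu' j"
    using assms unfolding free_block_def by auto
  then have maximal: "G = free_block n lam mu mu' j"
    if "free_block n lam mu mu' j \<subseteq> G" "G \<subseteq> {1..n}" "free_cond lam mu mu' G" for G
  proof (intro equalityI subsetI)
    fix i assume "i \<in> G"
    moreover have "j \<in> G" using that(1) \<open>j \<in> free_block n lam mu mu' j\<close> by blast
    ultimately show "i \<in> free_block n lam mu mu' j"
      using that(2,3) unfolding free_cond_def free_block_def by blast
  qed (use that(1) in blast)
  have "free_block n lam mu mu' j \<subseteq> {1..n}"
    unfolding free_block_def by auto
  then show ?thesis
    using free_cond_free_block[of lam mu mu' n j] maximal unfolding free_interval_def by blast
qed

lemma free_interval_containing_iff:
  "free_interval n lam mu mu' F \<and> j \<in> F \<longleftrightarrow>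
     j \<in> {1..n} \<and> mu j * mu' j < 0 \<and> F = free_block n lam mu mu' j"
proof
  assume F: "free_interval n lam mu mu' F \<and> j \<in> F"
  then have "F \<subseteq> {1..n}" "free_cond lam mu mu' F"
    unfolding free_interval_def by blast+
  then have "j \<in> {1..n}" "mu j * mu' j < 0"
    using F unfolding free_cond_def by blast+
  with F show "j \<in> {1..n} \<and> mu j * mu' j < 0 \<and> F = free_block n lam mu mu' j"
    using free_interval_eq_free_block by blast
next
  assume j: "j \<in> {1..n} \<and> mu j * mu' j < 0 \<and> F = free_block n lam mu mu' j"
  then have "j \<in> F" unfolding free_block_def by auto
  with j show "free_interval n lam mu mu' F \<and> j \<in> F"
    using free_interval_free_block by blast
qed

lemma mu'_star_eq:
  "mu'_star n lam mu mu' j =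
    (if j \<in> {1..n} \<and> mu j * mu' j < 0 then
       (if card {i \<in> free_block n lam mu mu' j. i < j}
             < card {i \<in> free_block n lam mu mu' j. mu' i = 1/2}
        then 1/2 else -1/2)
     else mu' j)"
  by (simp add: mu'_star_def free_interval_containing_iff)

lemma mu_star_eq:
  "mu_star n lam mu mu' j =
    (if j \<in> {1..n} \<and> mu j * mu' j < 0 then - mu'_star n lam mu mu' j else mu j)"
  by (simp add: mu_star_def free_interval_containing_iff)

lemma half_mult_neg_iff:
  fixes x y :: real
  assumes "x = 1/2 \<or> x = -1/2" "y = 1/2 \<or> y = -1/2"
  shows "x * y < 0 \<longleftrightarrow> y = - x"
  using assms by (elim disjE; hypsubst; simp)

lemma half_pm_Ints:
  fixes x y :: real
  assumes "x = 1/2 \<or> x = -1/2" "y = 1/2 \<or> y = -1/2"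
  shows "2 * x \<in> \<int>" "x - y \<in> \<int>"
  using assms by (elim disjE; hypsubst; simp)+

lemma mu'_star_in_PS: "mu' \<in> PS n \<Longrightarrow> mu'_star n lam mu mu' \<in> PS n"
  unfolding PS_def by (auto simp: mu'_star_eq)

lemma mu_star_in_PS:
  assumes "mu \<in> PS n" "mu' \<in> PS n"
  shows "mu_star n lam mu mu' \<in> PS n"
  using assms mu'_star_in_PS[OF assms(2), of lam mu] unfolding PS_def
  by (auto simp: mu_star_eq)

lemma mu'_star_add_mu_star:
  assumes "mu \<in> PS n" "mu' \<in> PS n"
  shows "mu'_star n lam mu mu' + mu_star n lam mu mu' = mu + mu'"
proof
  fix j
  have "mu j * mu' j < 0 \<Longrightarrow> j \<in> {1..n} \<Longrightarrow> mu' j = - mu j"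
    using assms half_mult_neg_iff unfolding PS_def by blast
  then show "(mu'_star n lam mu mu' + mu_star n lam mu mu') j = (mu + mu') j"
    by (auto simp: mu_star_eq mu'_star_eq)
qed

lemma Delta_subset_Pplus: "Delta n k \<subseteq> Pplus n"
proof
  fix lam assume "lam \<in> Delta n k"
  then obtain ms where ms: "lam = sum_list ms" "length ms = k"
      "\<forall>i\<in>{1..k}. sum_list (take i ms) \<in> Pplus n"
    unfolding Delta_def by blast
  show "lam \<in> Pplus n"
  proof (cases "k = 0")
    case True
    then show ?thesis using ms unfolding Pplus_def by simp
  next
    case False
    then show ?thesis using ms(3)[rule_format, of k] ms(1,2) by simp
  qed
qed

lemma Pplus_gap_ge_1:
  assumes "lam \<in> Pplus n" "1 \<le> j" "j < n" "lam (j + 1) < lam j"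
  shows "lam (j + 1) + 1 \<le> lam j"
proof -
  have "lam j - lam (j + 1) \<in> \<int>"
    using assms(1-3) unfolding Pplus_def by auto
  then obtain m where m: "lam j - lam (j + 1) = of_int m" by (auto elim: Ints_cases)
  then have "0 < m" using assms(4) by simp
  then show ?thesis using m by simp
qed

lemma mu'_star_step_le_of_lam_eq:
  assumes mu: "mu \<in> PS n" and mu': "mu' \<in> PS n"
    and j: "1 \<le> j" "j < n" and lam_eq: "lam (j + 1) = lam j"
    and sum_le: "mu (j + 1) + mu' (j + 1) \<le> mu j + mu' j"
  shows "mu'_star n lam mu mu' (j + 1) \<le> mu'_star n lam mu mu' j"
proof -
  have j_in: "j \<in> {1..n}" "j + 1 \<in> {1..n}" using j by auto
  then have vals: "mu j = 1/2 \<or> mu j = -1/2" "mu' j = 1/2 \<or> mu' j = -1/2"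
      "mu (j + 1) = 1/2 \<or> mu (j + 1) = -1/2" "mu' (j + 1) = 1/2 \<or> mu' (j + 1) = -1/2"
    using mu mu' unfolding PS_def by blast+
  have opp: "mu j * mu' j < 0 \<longleftrightarrow> mu' j = - mu j"
      "mu (j + 1) * mu' (j + 1) < 0 \<longleftrightarrow> mu' (j + 1) = - mu (j + 1)"
    using half_mult_neg_iff vals by blast+
  have star_vals: "mu'_star n lam mu mu' i = 1/2 \<or> mu'_star n lam mu mu' i = -1/2"
    if "i \<in> {1..n}" for i
    using that mu'_star_in_PS[OF mu'] unfolding PS_def by blast
  have not_free: "mu'_star n lam mu mu' i = mu' i \<and> mu' i = mu i"
    if "\<not> mu i * mu' i < 0" "i \<in> {j, j + 1}" for i
    using that vals opp by (auto simp: mu'_star_eq)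
  consider (both) "mu j * mu' j < 0" "mu (j + 1) * mu' (j + 1) < 0"
    | (left) "mu j * mu' j < 0" "\<not> mu (j + 1) * mu' (j + 1) < 0"
    | (right) "\<not> mu j * mu' j < 0" "mu (j + 1) * mu' (j + 1) < 0"
    | (neither) "\<not> mu j * mu' j < 0" "\<not> mu (j + 1) * mu' (j + 1) < 0"
    by blast
  then show ?thesis
  proof cases
    case both
    have same_block: "free_block n lam mu mu' (Suc j) = free_block n lam mu mu' j"
      unfolding free_block_def using lam_eq by simp
    \<comment> \<open>the count of earlier block members grows with j, so on a free interval
      mu'_star is 1/2 on an initial segment and -1/2 after it\<close>
    have "card {i \<in> free_block n lam mu mu' j. i < j}
        \<le> card {i \<in> free_block n lam mu mu' j. i < j + 1}"
      by (rule card_mono) (auto simp: free_block_def)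
    then show ?thesis using both j_in by (auto simp: mu'_star_eq same_block)
  next
    case left
    then have "mu'_star n lam mu mu' (j + 1) = -1/2"
      using not_free[of "j + 1"] opp(1) sum_le vals(4) by auto
    then show ?thesis using star_vals[OF j_in(1)] by auto
  next
    case right
    then have "mu'_star n lam mu mu' j = 1/2"
      using not_free[of j] opp(2) sum_le vals(2) by auto
    then show ?thesis using star_vals[OF j_in(2)] by auto
  next
    case neither
    then show ?thesis using not_free[of j] not_free[of "j + 1"] sum_le by auto
  qed
qed

lemma add_mu'_star_step_le:
  assumes lam: "lam \<in> Pplus n" and mu: "mu \<in> PS n" and mu': "mu' \<in> PS n"
    and sum: "lam + mu + mu' \<in> Pplus n" and j: "1 \<le> j" "j < n"
  shows "lam (j + 1) + mu'_star n lam mu mu' (j + 1) \<le> lam j + mu'_star n lam mu mu' j"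
proof (cases "lam (j + 1) < lam j")
  case True
  have "j \<in> {1..n}" "j + 1 \<in> {1..n}" using j by auto
  then have "mu'_star n lam mu mu' j = 1/2 \<or> mu'_star n lam mu mu' j = -1/2"
      "mu'_star n lam mu mu' (j + 1) = 1/2 \<or> mu'_star n lam mu mu' (j + 1) = -1/2"
    using mu'_star_in_PS[OF mu'] unfolding PS_def by blast+
  then show ?thesis using Pplus_gap_ge_1[OF lam j True] by auto
next
  case False
  then have lam_eq: "lam (j + 1) = lam j"
    using lam j unfolding Pplus_def by force
  have "mu (j + 1) + mu' (j + 1) \<le> mu j + mu' j"
    using sum j lam_eq unfolding Pplus_def by auto
  with mu'_star_step_le_of_lam_eq[OF mu mu' j lam_eq] show ?thesis
    using lam_eq by simp
qed

lemma add_PS_in_Pplus_iff: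
  assumes lam: "lam \<in> Pplus n" and nu: "nu \<in> PS n"
    and antimono: "\<forall>j. 1 \<le> j \<and> j < n \<longrightarrow> (lam + nu) (j + 1) \<le> (lam + nu) j"
  shows "lam + nu \<in> Pplus n \<longleftrightarrow> coroot_n n (lam + nu) \<ge> 0"
proof
  assume "lam + nu \<in> Pplus n"
  then show "coroot_n n (lam + nu) \<ge> 0" unfolding Pplus_def coroot_n_def by blast
next
  assume coroot: "coroot_n n (lam + nu) \<ge> 0"
  have nu_half: "nu j = 1/2 \<or> nu j = -1/2" if "j \<in> {1..n}" for j
    using that nu unfolding PS_def by blast
  have "2 * (lam + nu) j \<in> \<int>" if "j \<in> {1..n}" for j
  proof -
    have "2 * lam j + 2 * nu j \<in> \<int>"
      using that lam half_pm_Ints(1)[OF nu_half[OF that] nu_half[OF that]]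
      unfolding Pplus_def by (blast intro: Ints_add)
    then show ?thesis by (simp add: distrib_left)
  qed
  moreover have "(lam + nu) j - (lam + nu) k \<in> \<int>" if "j \<in> {1..n}" "k \<in> {1..n}" for j k
  proof -
    have "(lam j - lam k) + (nu j - nu k) \<in> \<int>"
      using that lam half_pm_Ints(2)[OF nu_half nu_half] unfolding Pplus_def
      by (blast intro: Ints_add)
    then show ?thesis by (simp add: algebra_simps)
  qed
  moreover have "(lam + nu) j = 0" if "j \<notin> {1..n}" for j
    using that lam nu unfolding Pplus_def PS_def by simp
  ultimately show "lam + nu \<in> Pplus n"
    using antimono coroot unfolding Pplus_def coroot_n_def by blast
qed

theorem corollary6p1:
  fixes n :: nat and lam mu mu' :: "nat \<Rightarrow> real"
  assumes "2 \<le> n"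
    and "admissible n lam mu mu'"
  shows "coroot_n n (lam + mu'_star n lam mu mu') \<ge> 0
     \<longleftrightarrow> admissible n lam (mu'_star n lam mu mu') (mu_star n lam mu mu')"
proof -
  obtain k where lam: "lam \<in> Delta n k" and mu: "mu \<in> PS n" and mu': "mu' \<in> PS n"
    and sum: "lam + mu + mu' \<in> Pplus n"
    using assms(2) unfolding admissible_def by blast
  have lam_Pplus: "lam \<in> Pplus n" using lam Delta_subset_Pplus by blast
  have "coroot_n n (lam + mu'_star n lam mu mu') \<ge> 0
      \<longleftrightarrow> lam + mu'_star n lam mu mu' \<in> Pplus n"
    using add_PS_in_Pplus_iff[OF lam_Pplus mu'_star_in_PS[OF mu']]
      add_mu'_star_step_le[OF lam_Pplus mu mu' sum] by simp
  moreover have sum_eq: "lam + mu'_star n lam mu mu' + mu_star n lam mu mu' = lam + mu + mu'"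
    using mu'_star_add_mu_star[OF mu mu'] by (simp add: add.assoc)
  ultimately show ?thesis
    unfolding admissible_def sum_eq using lam sum mu'_star_in_PS[OF mu'] mu_star_in_PS[OF mu mu']
    by auto
qed

end
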